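(* For any positive integers $k$ and $c$, there exists a connected cubic graph $G$ with $\omega(G) = 2k$ and $\mu_3(G)\geq c$.
   Context: A 1-factor is a spanning 1-regular subgraph. $\mu_3(G)$ is the minimum, over all lists (with possible repetition) of three 1-factors of $G$, of the number of edges of $G$ contained in none of them. The oddness $\omega(G)$ is the minimum number of odd circuits in a 2-factor of $G$. *)

theory Defs
  imports Main
begin

definition graph :: "'a set \<Rightarrow> 'a set set \<Rightarrow> bool" where
  "graph V E \<longleftrightarrow> finite V \<and> (\<forall>e\<in>E. e \<subseteq> V \<and> card e = 2)"

definition degree :: "'a set set \<Rightarrow> 'a \<Rightarrow> nat" where
  "degree E v = card {e\<in>E. v \<in> e}"

definition cubic :: "'a set \<Rightarrow> 'a set set \<Rightarrow> bool" where
  "cubic V E \<longleftrightarrow> graph V E \<and> (\<forall>v\<in>V. degree E v = 3)"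

definition adj :: "'a set set \<Rightarrow> ('a \<times> 'a) set" where
  "adj E = {(u, v). {u, v} \<in> E}"

definition connected_graph :: "'a set \<Rightarrow> 'a set set \<Rightarrow> bool" where
  "connected_graph V E \<longleftrightarrow> (\<forall>u\<in>V. \<forall>v\<in>V. (u, v) \<in> (adj E)\<^sup>*)"

definition one_factor :: "'a set \<Rightarrow> 'a set set \<Rightarrow> 'a set set \<Rightarrow> bool" where
  "one_factor V E M \<longleftrightarrow> M \<subseteq> E \<and> (\<forall>v\<in>V. degree M v = 1)"

definition two_factor :: "'a set \<Rightarrow> 'a set set \<Rightarrow> 'a set set \<Rightarrow> bool" where
  "two_factor V E F \<longleftrightarrow> F \<subseteq> E \<and> (\<forall>v\<in>V. degree F v = 2)"

text \<open>Vertex sets of the connected components of the spanning subgraph (V, F).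
For a 2-factor these are exactly the vertex sets of its circuits.\<close>
definition components :: "'a set \<Rightarrow> 'a set set \<Rightarrow> 'a set set" where
  "components V F = (\<lambda>v. {u\<in>V. (v, u) \<in> (adj F)\<^sup>*}) ` V"

definition odd_circuits :: "'a set \<Rightarrow> 'a set set \<Rightarrow> nat" where
  "odd_circuits V F = card {C\<in>components V F. odd (card C)}"

definition oddness :: "'a set \<Rightarrow> 'a set set \<Rightarrow> nat" where
  "oddness V E = Min {odd_circuits V F | F. two_factor V E F}"

definition mu3 :: "'a set \<Rightarrow> 'a set set \<Rightarrow> nat" where
  "mu3 V E = Min {card (E - (M1 \<union> M2 \<union> M3)) | M1 M2 M3.
      one_factor V E M1 \<and> one_factor V E M2 \<and> one_factor V E M3}"

end

theory Submission
  imports Defs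
begin

text \<open>
  The graph is a path of blocks joined by bridges. Both end blocks are copies of a gadget,
  \<open>K\<^sub>4\<close> with one edge subdivided, attached through the subdivision vertex; after the
  first end come \<open>K - 1\<close> triangles, each carrying a pendant gadget at its third vertex, and
  then \<open>m + 1 - K\<close> diamonds (\<open>K\<^sub>4\<close> minus an edge).

  Every vertex meets exactly two edges of a 2-factor. Applied inside an end gadget, this rule
  excludes the edge leaving it, and from there it propagates along the path: no 2-factor uses a
  bridge. So every 2-factor consists of the 5-circuits of the \<open>K + 1\<close> gadgets, the
  \<open>K - 1\<close> triangles and the 4-circuits of the diamonds, and has exactly \<open>2 K\<close> odd
  circuits. Since the 1-factors of a cubic graph are the complements of its 2-factors, an edge
  lying in every 2-factor lies in no 1-factor; taking one such edge in each diamond gives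
  \<open>\<mu>\<^sub>3 \<ge> m + 1 - K\<close>, which is \<open>c\<close> for \<open>m = K - 1 + c\<close>.
\<close>

section \<open>Graphs given by symmetric neighbourhoods\<close>

definition nbhd_edges :: "'a set \<Rightarrow> ('a \<Rightarrow> 'a set) \<Rightarrow> 'a set set" where
  "nbhd_edges V N = {{a, b} | a b. a \<in> V \<and> b \<in> N a}"

definition sym_nbhd :: "'a set \<Rightarrow> ('a \<Rightarrow> 'a set) \<Rightarrow> bool" where
  "sym_nbhd V N \<longleftrightarrow> (\<forall>v\<in>V. \<forall>w\<in>N v. w \<in> V \<and> v \<in> N w \<and> w \<noteq> v)"

lemma incident_nbhd_edges:
  assumes "sym_nbhd V N" "v \<in> V"
  shows "{e \<in> nbhd_edges V N. v \<in> e} = (\<lambda>w. {v, w}) ` N v"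
proof
  show "{e \<in> nbhd_edges V N. v \<in> e} \<subseteq> (\<lambda>w. {v, w}) ` N v"
  proof
    fix e assume "e \<in> {e \<in> nbhd_edges V N. v \<in> e}"
    then obtain a b where e: "e = {a, b}" "a \<in> V" "b \<in> N a" "v \<in> e"
      unfolding nbhd_edges_def by auto
    show "e \<in> (\<lambda>w. {v, w}) ` N v"
    proof (cases "v = a")
      case True
      then show ?thesis using e by auto
    next
      case False
      then have "v = b" using e by auto
      then have "a \<in> N v" using e assms(1) unfolding sym_nbhd_def by blast
      moreover have "e = {v, a}" using e \<open>v = b\<close> by blast
      ultimately show ?thesis by blast
    qed
  qed
  show "(\<lambda>w. {v, w}) ` N v \<subseteq> {e \<in> nbhd_edges V N. v \<in> e}"
    using assms unfolding nbhd_edges_def by auto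
qed

lemma degree_subgraph_nbhd_edges:
  assumes "sym_nbhd V N" "v \<in> V" "F \<subseteq> nbhd_edges V N"
  shows "degree F v = card {w \<in> N v. {v, w} \<in> F}"
proof -
  have "{e \<in> F. v \<in> e} = {e \<in> nbhd_edges V N. v \<in> e} \<inter> F"
    using assms(3) by auto
  also have "\<dots> = (\<lambda>w. {v, w}) ` {w \<in> N v. {v, w} \<in> F}"
    using incident_nbhd_edges[OF assms(1,2)] by auto
  finally have "{e \<in> F. v \<in> e} = (\<lambda>w. {v, w}) ` {w \<in> N v. {v, w} \<in> F}" .
  moreover have "inj_on (\<lambda>w. {v, w}) {w \<in> N v. {v, w} \<in> F}"
    by (auto simp: inj_on_def doubleton_eq_iff)
  ultimately show ?thesis unfolding degree_def by (simp add: card_image)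
qed

lemma degree_nbhd_edges:
  assumes "sym_nbhd V N" "v \<in> V"
  shows "degree (nbhd_edges V N) v = card (N v)"
proof -
  have "{w \<in> N v. {v, w} \<in> nbhd_edges V N} = N v"
    using assms unfolding nbhd_edges_def by auto
  then show ?thesis using degree_subgraph_nbhd_edges[OF assms order_refl] by simp
qed

lemma mem_nbhd_if_edge:
  assumes "sym_nbhd V N" "v \<in> V" "F \<subseteq> nbhd_edges V N" "{v, w} \<in> F"
  shows "w \<in> N v"
proof -
  have "{v, w} \<in> (\<lambda>w. {v, w}) ` N v"
    using assms incident_nbhd_edges[OF assms(1,2)] by blast
  then show ?thesis by (auto simp: doubleton_eq_iff)
qed

lemma cubic_nbhd_edges:
  assumes "sym_nbhd V N" "finite V" "\<And>v. v \<in> V \<Longrightarrow> card (N v) = 3"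
  shows "cubic V (nbhd_edges V N)"
  unfolding cubic_def graph_def
proof (intro conjI ballI)
  fix e assume "e \<in> nbhd_edges V N"
  then obtain a b where e: "e = {a, b}" "a \<in> V" "b \<in> N a"
    unfolding nbhd_edges_def by blast
  then have "b \<in> V" "b \<noteq> a" using assms(1) unfolding sym_nbhd_def by blast+
  then show "e \<subseteq> V" "card e = 2" using e by auto
next
  fix v assume "v \<in> V"
  then show "degree (nbhd_edges V N) v = 3"
    using degree_nbhd_edges[OF assms(1)] assms(3) by simp
qed (rule assms(2))

lemma two_factor_nbhd_edges:
  assumes "sym_nbhd V N"
    and "\<And>v. v \<in> V \<Longrightarrow> N' v \<subseteq> N v" "\<And>v. v \<in> V \<Longrightarrow> card (N' v) = 2"
    and "\<And>v w. v \<in> V \<Longrightarrow> w \<in> N' v \<Longrightarrow> v \<in> N' w"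
  shows "two_factor V (nbhd_edges V N) (nbhd_edges V N')"
proof -
  have "sym_nbhd V N'" using assms unfolding sym_nbhd_def by blast
  moreover have "nbhd_edges V N' \<subseteq> nbhd_edges V N"
    using assms(2) unfolding nbhd_edges_def by blast
  ultimately show ?thesis
    unfolding two_factor_def using degree_nbhd_edges[of V N'] assms(3) by auto
qed

lemma rtrancl_adj_nbhd_step:
  assumes "(r, v) \<in> (adj (nbhd_edges V N))\<^sup>*" "v \<in> V" "w \<in> N v"
  shows "(r, w) \<in> (adj (nbhd_edges V N))\<^sup>*"
proof -
  have "(v, w) \<in> adj (nbhd_edges V N)" using assms unfolding adj_def nbhd_edges_def by auto
  with assms(1) show ?thesis by simp
qed

definition exactly_two :: "bool \<Rightarrow> bool \<Rightarrow> bool \<Rightarrow> bool" where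
  "exactly_two p q r \<longleftrightarrow> (p \<and> q \<and> \<not> r) \<or> (p \<and> \<not> q \<and> r) \<or> (\<not> p \<and> q \<and> r)"

lemma exactly_two_if_degree_two:
  assumes "sym_nbhd V N" "v \<in> V" "F \<subseteq> nbhd_edges V N" "degree F v = 2"
    and "N v = {a, b, c}" "a \<noteq> b" "a \<noteq> c" "b \<noteq> c"
  shows "exactly_two ({v, a} \<in> F) ({v, b} \<in> F) ({v, c} \<in> F)"
proof -
  have "{w \<in> {a, b, c}. {v, w} \<in> F} =
      (if {v, a} \<in> F then {a} else {}) \<union> (if {v, b} \<in> F then {b} else {})
        \<union> (if {v, c} \<in> F then {c} else {})"
    by auto
  moreover have "card {w \<in> {a, b, c}. {v, w} \<in> F} = 2"
    using degree_subgraph_nbhd_edges[OF assms(1-3)] assms(4,5) by simp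
  ultimately have "card ((if {v, a} \<in> F then {a} else {}) \<union> (if {v, b} \<in> F then {b} else {})
        \<union> (if {v, c} \<in> F then {c} else {})) = 2"
    by simp
  then show ?thesis using assms(6-8) unfolding exactly_two_def
    by (cases "{v, a} \<in> F"; cases "{v, b} \<in> F"; cases "{v, c} \<in> F"; simp)
qed

text \<open>The local constraints of a 2-factor inside each kind of block, stated propositionally:
  \<open>f u w\<close> stands for \<open>{u, w} \<in> F\<close>.\<close>

lemma exactly_two_gadget:
  assumes "exactly_two (f x a) (f x b) (f x e)" "exactly_two (f a x) (f a c) (f a d)"
    "exactly_two (f b x) (f b c) (f b d)" "exactly_two (f c a) (f c b) (f c d)"
    "exactly_two (f d a) (f d b) (f d c)"
    and sym: "\<And>u v. f u v = f v u"
  shows "\<not> f x e \<and> f x a \<and> f x b \<and> f c d \<and> (f a c \<or> f a d)"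
  using assms(1-5) sym[of a x] sym[of b x] sym[of c a] sym[of c b] sym[of d a] sym[of d b] sym[of d c]
  unfolding exactly_two_def by auto

lemma exactly_two_triangle:
  assumes "exactly_two (f a b) (f a c) (f a l)" "exactly_two (f b a) (f b c) (f b r)"
    "exactly_two (f c a) (f c b) (f c x)" "\<not> f c x" "\<not> f a l"
    and sym: "\<And>u v. f u v = f v u"
  shows "\<not> f b r \<and> f a b \<and> f a c \<and> f b c"
  using assms(1-5) sym[of b a] sym[of c a] sym[of c b]
  unfolding exactly_two_def by auto

lemma exactly_two_diamond:
  assumes "exactly_two (f a c) (f a d) (f a l)" "exactly_two (f b c) (f b d) (f b r)"
    "exactly_two (f c a) (f c b) (f c d)" "exactly_two (f d a) (f d b) (f d c)" "\<not> f a l"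
    and sym: "\<And>u v. f u v = f v u"
  shows "\<not> f b r \<and> f a c \<and> f a d \<and> f b c \<and> f b d"
  using assms(1-5) sym[of c a] sym[of c b] sym[of d a] sym[of d b] sym[of d c]
  unfolding exactly_two_def by auto

section \<open>Factors and components\<close>

lemma finite_edges_if_cubic: "cubic V E \<Longrightarrow> finite E"
  unfolding cubic_def graph_def by (meson PowI finite_Pow_iff finite_subset subsetI)

lemma degree_Diff:
  assumes "finite E" "M \<subseteq> E"
  shows "degree (E - M) v = degree E v - degree M v"
proof -
  have "{e \<in> E - M. v \<in> e} = {e \<in> E. v \<in> e} - {e \<in> M. v \<in> e}" by auto
  moreover have "{e \<in> M. v \<in> e} \<subseteq> {e \<in> E. v \<in> e}" using assms(2) by auto
  ultimately show ?thesis
    unfolding degree_def using assms(1) by (simp add: card_Diff_subset finite_subset)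
qed

lemma two_factor_Diff_one_factor:
  "cubic V E \<Longrightarrow> one_factor V E M \<Longrightarrow> two_factor V E (E - M)"
  unfolding two_factor_def by (auto simp: degree_Diff finite_edges_if_cubic one_factor_def cubic_def)

lemma one_factor_Diff_two_factor:
  "cubic V E \<Longrightarrow> two_factor V E F \<Longrightarrow> one_factor V E (E - F)"
  unfolding one_factor_def by (auto simp: degree_Diff finite_edges_if_cubic two_factor_def cubic_def)

lemma oddness_eqI:
  assumes "two_factor V E F\<^sub>0" "\<And>F. two_factor V E F \<Longrightarrow> odd_circuits V F = n"
  shows "oddness V E = n"
proof -
  have "{odd_circuits V F | F. two_factor V E F} = {n}"
    using assms by blast
  then show ?thesis unfolding oddness_def by simp
qed

lemma card_le_mu3_if_in_every_two_factor:
  assumes "cubic V E" "two_factor V E F\<^sub>0" "\<And>F. two_factor V E F \<Longrightarrow> U \<subseteq> F"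
  shows "card U \<le> mu3 V E"
proof -
  let ?S = "{card (E - (M1 \<union> M2 \<union> M3)) | M1 M2 M3.
      one_factor V E M1 \<and> one_factor V E M2 \<and> one_factor V E M3}"
  have fin: "finite E" using finite_edges_if_cubic[OF assms(1)] .
  have "?S \<noteq> {}" using one_factor_Diff_two_factor[OF assms(1,2)] by blast
  moreover have "finite ?S"
    by (rule finite_subset[of _ "{..card E}"]) (auto simp: fin card_mono)
  moreover have "card U \<le> x" if "x \<in> ?S" for x
  proof -
    obtain M1 M2 M3 where M: "one_factor V E M1" "one_factor V E M2" "one_factor V E M3"
      and x: "x = card (E - (M1 \<union> M2 \<union> M3))"
      using \<open>x \<in> ?S\<close> by blast
    have "U \<subseteq> E - Mi" if "one_factor V E Mi" for Mi
      using assms(3)[OF two_factor_Diff_one_factor[OF assms(1) that]] .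
    then have "U \<subseteq> E - (M1 \<union> M2 \<union> M3)" using M by blast
    then show ?thesis using x fin by (simp add: card_mono)
  qed
  ultimately show ?thesis unfolding mu3_def by simp
qed

lemma sym_rtrancl_adj: "sym ((adj F)\<^sup>*)"
  by (rule sym_rtrancl) (auto simp: adj_def sym_def insert_commute)

lemma rtrancl_adj_if_edge: "{u, w} \<in> F \<Longrightarrow> (u, w) \<in> (adj F)\<^sup>*"
  unfolding adj_def by auto

lemma rtrancl_adj_edge: "(r, u) \<in> (adj F)\<^sup>* \<Longrightarrow> {u, w} \<in> F \<Longrightarrow> (r, w) \<in> (adj F)\<^sup>*"
  unfolding adj_def by (auto intro: rtrancl_into_rtrancl)

definition closed_connected :: "'a set set \<Rightarrow> 'a set \<Rightarrow> bool" where
  "closed_connected F C \<longleftrightarrow>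
    (\<forall>v\<in>C. \<forall>w. {v, w} \<in> F \<longrightarrow> w \<in> C) \<and> (\<forall>v\<in>C. \<forall>u\<in>C. (v, u) \<in> (adj F)\<^sup>*)"

lemma closed_connectedI:
  assumes "\<And>v w. v \<in> C \<Longrightarrow> {v, w} \<in> F \<Longrightarrow> w \<in> C" "\<And>u. u \<in> C \<Longrightarrow> (r, u) \<in> (adj F)\<^sup>*"
  shows "closed_connected F C"
  using assms sym_rtrancl_adj[of F] unfolding closed_connected_def sym_def
  by (meson rtrancl_trans)

lemma components_eq_image:
  assumes "\<And>v. v \<in> V \<Longrightarrow> v \<in> C v" "\<And>v. v \<in> V \<Longrightarrow> C v \<subseteq> V"
    and "\<And>v u. v \<in> V \<Longrightarrow> u \<in> C v \<Longrightarrow> C u = C v"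
    and "\<And>v. v \<in> V \<Longrightarrow> closed_connected F (C v)"
  shows "components V F = C ` V"
proof -
  have "{u \<in> V. (v, u) \<in> (adj F)\<^sup>*} = C v" if v: "v \<in> V" for v
  proof
    show "C v \<subseteq> {u \<in> V. (v, u) \<in> (adj F)\<^sup>*}"
      using assms(1,2,4) v unfolding closed_connected_def by auto
    have "u \<in> C v" if "(v, u) \<in> (adj F)\<^sup>*" for u
      using that
    proof (induction rule: rtrancl_induct)
      case base
      then show ?case using assms(1) v .
    next
      case (step y z)
      then have "{y, z} \<in> F" unfolding adj_def by auto
      then show ?case using assms(4) v step.IH unfolding closed_connected_def by blast
    qed
    then show "{u \<in> V. (v, u) \<in> (adj F)\<^sup>*} \<subseteq> C v" by auto
  qed
  then show ?thesis unfolding components_def by (auto intro!: image_cong)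
qed

section \<open>The chain of blocks\<close>

text \<open>Vertex \<open>vx j s\<close> is slot \<open>s < 8\<close> of block \<open>j\<close>. A triangle occupies slots 0, 1, 6
  and a diamond slots 0, 1, 2, 3, where 0 and 1 are joined to the previous and the next block; a
  gadget occupies slots 2, 3, 4, 5, 7 and is attached at 7.\<close>

definition vx :: "nat \<Rightarrow> nat \<Rightarrow> nat" where
  "vx j s = 8 * j + s"

lemma vx_eq_iff [simp]: "s < 8 \<Longrightarrow> t < 8 \<Longrightarrow> vx j s = vx i t \<longleftrightarrow> j = i \<and> s = t"
  unfolding vx_def by presburger

lemma vx_div [simp]: "s < 8 \<Longrightarrow> vx j s div 8 = j"
  and vx_mod [simp]: "s < 8 \<Longrightarrow> vx j s mod 8 = s"
  unfolding vx_def by simp_all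

text \<open>\<open>K\<^sub>4\<close> on slots 2, 3, 4, 5 with the edge 23 subdivided by 7; \<open>e\<close> is the
  neighbour of 7 outside the gadget.\<close>

definition gadget_nbrs :: "nat \<Rightarrow> nat \<Rightarrow> nat \<Rightarrow> nat set" where
  "gadget_nbrs j e s =
    (if s = 7 then {vx j 2, vx j 3, e}
     else if s = 2 \<or> s = 3 then {vx j 7, vx j 4, vx j 5}
     else if s = 4 then {vx j 2, vx j 3, vx j 5}
     else if s = 5 then {vx j 2, vx j 3, vx j 4} else {})"

definition gadget_cycle_nbrs :: "nat \<Rightarrow> nat \<Rightarrow> nat set" where
  "gadget_cycle_nbrs j s =
    (if s = 7 then {vx j 2, vx j 3} else if s = 2 then {vx j 7, vx j 4}
     else if s = 3 then {vx j 7, vx j 5} else if s = 4 then {vx j 2, vx j 5}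
     else if s = 5 then {vx j 3, vx j 4} else {})"

definition gadget_circuit :: "nat \<Rightarrow> nat set" where
  "gadget_circuit j = vx j ` {2, 3, 4, 5, 7}"

definition triangle_circuit :: "nat \<Rightarrow> nat set" where
  "triangle_circuit j = vx j ` {0, 1, 6}"

definition diamond_circuit :: "nat \<Rightarrow> nat set" where
  "diamond_circuit j = vx j ` {0, 1, 2, 3}"

lemma card_gadget_circuit [simp]: "card (gadget_circuit j) = 5"
  and card_triangle_circuit [simp]: "card (triangle_circuit j) = 3"
  and card_diamond_circuit [simp]: "card (diamond_circuit j) = 4"
  by (simp_all add: gadget_circuit_def triangle_circuit_def diamond_circuit_def)

lemma inj_gadget_circuit: "inj gadget_circuit"
proof (rule injI)
  fix a b assume eq: "gadget_circuit a = gadget_circuit b"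
  have "vx a 7 \<in> gadget_circuit b" unfolding eq[symmetric] by (simp add: gadget_circuit_def)
  then show "a = b" by (simp add: gadget_circuit_def)
qed

lemma inj_triangle_circuit: "inj triangle_circuit"
proof (rule injI)
  fix a b assume eq: "triangle_circuit a = triangle_circuit b"
  have "vx a 0 \<in> triangle_circuit b" unfolding eq[symmetric] by (simp add: triangle_circuit_def)
  then show "a = b" by (simp add: triangle_circuit_def)
qed

lemma gadget_circuit_neq_triangle_circuit: "gadget_circuit a \<noteq> triangle_circuit b"
proof
  assume eq: "gadget_circuit a = triangle_circuit b"
  have "vx a 7 \<in> triangle_circuit b" unfolding eq[symmetric] by (simp add: gadget_circuit_def)
  then show False by (simp add: triangle_circuit_def)
qed

locale chain_graph =
  fixes K m :: nat
  assumes K_pos: "1 \<le> K" and K_le_m: "K \<le> m"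
begin

definition right_port :: "nat \<Rightarrow> nat" where
  "right_port j = (if j = 0 then vx 0 7 else vx j 1)"

definition left_port :: "nat \<Rightarrow> nat" where
  "left_port j = (if j = Suc m then vx j 7 else vx j 0)"

definition block_slots :: "nat \<Rightarrow> nat set" where
  "block_slots j =
    (if j = 0 \<or> j = Suc m then {2, 3, 4, 5, 7}
     else if j < K then {0, 1, 2, 3, 4, 5, 6, 7}
     else if j \<le> m then {0, 1, 2, 3} else {})"

definition block_nbrs :: "nat \<Rightarrow> nat \<Rightarrow> nat set" where
  "block_nbrs j s =
    (if j = 0 then gadget_nbrs 0 (left_port 1) s
     else if j = Suc m then gadget_nbrs j (right_port m) s
     else if j < K then
       (if s = 0 then {vx j 1, vx j 6, right_port (j - 1)}
        else if s = 1 then {vx j 0, vx j 6, left_port (Suc j)}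
        else if s = 6 then {vx j 0, vx j 1, vx j 7}
        else gadget_nbrs j (vx j 6) s)
     else if j \<le> m then
       (if s = 0 then {vx j 2, vx j 3, right_port (j - 1)}
        else if s = 1 then {vx j 2, vx j 3, left_port (Suc j)}
        else if s = 2 then {vx j 0, vx j 1, vx j 3}
        else if s = 3 then {vx j 0, vx j 1, vx j 2} else {})
     else {})"

definition verts :: "nat set" where
  "verts = (\<Union>j\<le>Suc m. vx j ` block_slots j)"

definition nbrs :: "nat \<Rightarrow> nat set" where
  "nbrs v = block_nbrs (v div 8) (v mod 8)"

definition edges :: "nat set set" where
  "edges = nbhd_edges verts nbrs"

lemma block_end0: "block_slots 0 = {2, 3, 4, 5, 7}" "block_nbrs 0 s = gadget_nbrs 0 (left_port 1) s"
  by (simp_all add: block_slots_def block_nbrs_def)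

lemma block_end1:
  "block_slots (Suc m) = {2, 3, 4, 5, 7}" "block_nbrs (Suc m) s = gadget_nbrs (Suc m) (right_port m) s"
  by (simp_all add: block_slots_def block_nbrs_def)

lemma block_triangle:
  assumes "0 < j" "j < K"
  shows "block_slots j = {0, 1, 2, 3, 4, 5, 6, 7}"
    and "block_nbrs j s =
      (if s = 0 then {vx j 1, vx j 6, right_port (j - 1)}
       else if s = 1 then {vx j 0, vx j 6, left_port (Suc j)}
       else if s = 6 then {vx j 0, vx j 1, vx j 7}
       else gadget_nbrs j (vx j 6) s)"
  using assms K_le_m by (simp_all add: block_slots_def block_nbrs_def)

lemma block_diamond:
  assumes "K \<le> j" "j \<le> m"
  shows "block_slots j = {0, 1, 2, 3}"
    and "block_nbrs j s =
      (if s = 0 then {vx j 2, vx j 3, right_port (j - 1)}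
       else if s = 1 then {vx j 2, vx j 3, left_port (Suc j)}
       else if s = 2 then {vx j 0, vx j 1, vx j 3}
       else if s = 3 then {vx j 0, vx j 1, vx j 2} else {})"
  using assms K_pos by (simp_all add: block_slots_def block_nbrs_def)

lemma right_port_Suc: "right_port (Suc j) = vx (Suc j) 1"
  and left_port_le: "j \<le> m \<Longrightarrow> left_port j = vx j 0"
  by (simp_all add: right_port_def left_port_def)

lemma block_slots_lt: "s \<in> block_slots j \<Longrightarrow> s < 8"
  unfolding block_slots_def by (auto split: if_splits)

lemma mem_verts_vx [simp]: "s < 8 \<Longrightarrow> vx j s \<in> verts \<longleftrightarrow> j \<le> Suc m \<and> s \<in> block_slots j"
  unfolding verts_def using block_slots_lt by fastforce

lemma nbrs_vx [simp]: "s < 8 \<Longrightarrow> nbrs (vx j s) = block_nbrs j s"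
  by (simp add: nbrs_def)

lemma finite_verts: "finite verts"
  unfolding verts_def block_slots_def by auto

lemma vertex_cases [consumes 1, case_names end0 end1 triangle diamond]:
  assumes "v \<in> verts"
  obtains (end0) s where "v = vx 0 s" "s \<in> {2, 3, 4, 5, 7}"
  | (end1) s where "v = vx (Suc m) s" "s \<in> {2, 3, 4, 5, 7}"
  | (triangle) j s where "v = vx j s" "0 < j" "j < K" "s \<in> {0, 1, 2, 3, 4, 5, 6, 7}"
  | (diamond) j s where "v = vx j s" "K \<le> j" "j \<le> m" "s \<in> {0, 1, 2, 3}"
proof -
  obtain j s where "j \<le> Suc m" "s \<in> block_slots j" "v = vx j s"
    using assms unfolding verts_def by auto
  moreover consider "j = 0" | "j = Suc m" | "0 < j \<and> j < K" | "K \<le> j \<and> j \<le> m"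
    using \<open>j \<le> Suc m\<close> by linarith
  ultimately show ?thesis
    using that block_end0(1) block_end1(1) block_triangle(1) block_diamond(1) by metis
qed

lemma bridge_ports:
  assumes "i \<le> m"
  shows "right_port i \<in> verts \<and> left_port (Suc i) \<in> verts
    \<and> left_port (Suc i) \<in> nbrs (right_port i) \<and> right_port i \<in> nbrs (left_port (Suc i))
    \<and> right_port i \<noteq> left_port (Suc i)"
proof -
  have left: "right_port i \<in> verts \<and> left_port (Suc i) \<in> nbrs (right_port i)"
  proof -
    consider "i = 0" | "0 < i \<and> i < K" | "K \<le> i" by linarith
    then show ?thesis
    proof cases
      case 1
      then show ?thesis by (simp add: right_port_def block_end0 gadget_nbrs_def)
    next
      case 2
      then show ?thesis using assms K_le_m by (simp add: right_port_def block_triangle)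
    next
      case 3
      then show ?thesis using assms K_pos by (simp add: right_port_def block_diamond)
    qed
  qed
  have right: "left_port (Suc i) \<in> verts \<and> right_port i \<in> nbrs (left_port (Suc i))"
  proof -
    consider "i = m" | "Suc i < K" | "K \<le> Suc i \<and> i < m" using assms by linarith
    then show ?thesis
    proof cases
      case 1
      then show ?thesis by (simp add: left_port_def block_end1 gadget_nbrs_def)
    next
      case 2
      then show ?thesis using K_le_m by (simp add: left_port_def block_triangle)
    next
      case 3
      then show ?thesis by (simp add: left_port_def block_diamond)
    qed
  qed
  show ?thesis using left right by (simp add: right_port_def left_port_def)
qed

lemma bridge_at_left_port:
  assumes "0 < j" "j \<le> m"
  shows "right_port (j - 1) \<in> verts \<and> vx j 0 \<in> nbrs (right_port (j - 1))
    \<and> right_port (j - 1) \<noteq> vx j 0"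
  using bridge_ports[of "j - 1"] assms by (simp add: left_port_le)

lemma bridge_at_right_port:
  assumes "0 < j" "j \<le> m"
  shows "left_port (Suc j) \<in> verts \<and> vx j 1 \<in> nbrs (left_port (Suc j))
    \<and> left_port (Suc j) \<noteq> vx j 1"
  using bridge_ports[of j] assms by (simp add: right_port_def)

lemma sym_nbhd_nbrs: "sym_nbhd verts nbrs"
  unfolding sym_nbhd_def
proof (intro ballI)
  fix v w assume v: "v \<in> verts" and w: "w \<in> nbrs v"
  from v show "w \<in> verts \<and> v \<in> nbrs w \<and> w \<noteq> v"
  proof (cases rule: vertex_cases)
    case (end0 s)
    then show ?thesis using w bridge_ports[of 0]
      by (auto simp: block_end0 gadget_nbrs_def right_port_def)
  next
    case (end1 s)
    then show ?thesis using w bridge_ports[of m]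
      by (auto simp: block_end1 gadget_nbrs_def left_port_def)
  next
    case (triangle j s)
    then show ?thesis
      using w bridge_at_left_port[of j] bridge_at_right_port[of j] K_le_m
      by (auto simp: block_triangle gadget_nbrs_def)
  next
    case (diamond j s)
    then show ?thesis
      using w bridge_at_left_port[of j] bridge_at_right_port[of j] K_pos
      by (auto simp: block_diamond)
  qed
qed

lemma card_nbrs:
  assumes "v \<in> verts"
  shows "card (nbrs v) = 3"
  using assms
proof (cases rule: vertex_cases)
  case (end0 s)
  then show ?thesis by (auto simp: block_end0 gadget_nbrs_def left_port_def)
next
  case (end1 s)
  then show ?thesis by (auto simp: block_end1 gadget_nbrs_def right_port_def)
next
  case (triangle j s)
  then show ?thesis by (auto simp: block_triangle gadget_nbrs_def right_port_def left_port_def)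
next
  case (diamond j s)
  then show ?thesis by (auto simp: block_diamond right_port_def left_port_def)
qed

lemma cubic_chain: "cubic verts edges"
  unfolding edges_def using cubic_nbhd_edges sym_nbhd_nbrs finite_verts card_nbrs by blast

definition gadget_at :: "nat \<Rightarrow> nat \<Rightarrow> bool" where
  "gadget_at j e \<longleftrightarrow> j \<le> Suc m \<and> {2, 3, 4, 5, 7} \<subseteq> block_slots j
    \<and> (\<forall>s\<in>{2, 3, 4, 5, 7}. block_nbrs j s = gadget_nbrs j e s) \<and> e \<notin> gadget_circuit j"

lemma gadget_at_end0: "gadget_at 0 (left_port 1)"
  by (simp add: gadget_at_def block_end0 gadget_circuit_def left_port_def)

lemma gadget_at_end1: "gadget_at (Suc m) (right_port m)"
  by (simp add: gadget_at_def block_end1 gadget_circuit_def right_port_def)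

lemma gadget_at_triangle: "0 < j \<Longrightarrow> j < K \<Longrightarrow> gadget_at j (vx j 6)"
  using K_le_m by (simp add: gadget_at_def block_triangle gadget_circuit_def)

lemma gadget_atD:
  assumes "gadget_at j e" "s \<in> {2, 3, 4, 5, 7}"
  shows "vx j s \<in> verts" "block_nbrs j s = gadget_nbrs j e s" "e \<noteq> vx j s"
  using assms unfolding gadget_at_def gadget_circuit_def by auto

lemma reachable_step:
  "(r, v) \<in> (adj edges)\<^sup>* \<Longrightarrow> v \<in> verts \<Longrightarrow> w \<in> nbrs v \<Longrightarrow> (r, w) \<in> (adj edges)\<^sup>*"
  unfolding edges_def by (rule rtrancl_adj_nbhd_step)

lemma reachable_gadget:
  assumes "gadget_at j e" "(r, vx j 7) \<in> (adj edges)\<^sup>*" "s \<in> {2, 3, 4, 5, 7}"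
  shows "(r, vx j s) \<in> (adj edges)\<^sup>*"
proof -
  note step = reachable_step[OF _ gadget_atD(1)[OF assms(1)]]
  have "(r, vx j 2) \<in> (adj edges)\<^sup>*" "(r, vx j 3) \<in> (adj edges)\<^sup>*"
    using step[OF assms(2)] gadget_atD(2)[OF assms(1)] by (auto simp: gadget_nbrs_def)
  moreover have "(r, vx j 4) \<in> (adj edges)\<^sup>*" "(r, vx j 5) \<in> (adj edges)\<^sup>*"
    using step[OF calculation(1)] gadget_atD(2)[OF assms(1)] by (auto simp: gadget_nbrs_def)
  ultimately show ?thesis using assms(2,3) by auto
qed

lemma reachable_right_port: "j \<le> m \<Longrightarrow> (vx 0 7, right_port j) \<in> (adj edges)\<^sup>*"
proof (induction j)
  case 0
  then show ?case by (simp add: right_port_def)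
next
  case (Suc j)
  have "(vx 0 7, vx (Suc j) 0) \<in> (adj edges)\<^sup>*"
    using reachable_step[OF Suc.IH] bridge_ports[of j] Suc.prems by (simp add: left_port_le)
  moreover have "vx (Suc j) 0 \<in> verts" using bridge_ports[of j] Suc.prems by (simp add: left_port_le)
  ultimately have left: "(vx 0 7, vx (Suc j) t) \<in> (adj edges)\<^sup>*"
    if "vx (Suc j) t \<in> nbrs (vx (Suc j) 0)" for t
    using reachable_step that by blast
  show ?case
  proof (cases "Suc j < K")
    case True
    then show ?thesis using left[of 1] by (simp add: block_triangle right_port_Suc)
  next
    case False
    then have "(vx 0 7, vx (Suc j) 2) \<in> (adj edges)\<^sup>*" "vx (Suc j) 2 \<in> verts"
      using left[of 2] Suc.prems by (simp_all add: block_diamond)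
    then show ?thesis
      using reachable_step False Suc.prems by (simp add: block_diamond right_port_Suc)
  qed
qed

lemma reachable_from_end0:
  assumes "v \<in> verts"
  shows "(vx 0 7, v) \<in> (adj edges)\<^sup>*"
  using assms
proof (cases rule: vertex_cases)
  case (end0 s)
  then show ?thesis using reachable_gadget[OF gadget_at_end0] by simp
next
  case (end1 s)
  have "(vx 0 7, vx (Suc m) 7) \<in> (adj edges)\<^sup>*"
    using reachable_step[OF reachable_right_port[of m]] bridge_ports[of m] by (simp add: left_port_def)
  then show ?thesis using end1 reachable_gadget[OF gadget_at_end1] by simp
next
  case (triangle j s)
  note [simp] = block_triangle[OF triangle(2,3)]
  have j: "j \<le> m" using triangle K_le_m by simp
  have r1: "(vx 0 7, vx j 1) \<in> (adj edges)\<^sup>*"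
    using reachable_right_port[OF j] triangle by (simp add: right_port_def)
  have r06: "(vx 0 7, vx j 0) \<in> (adj edges)\<^sup>*" "(vx 0 7, vx j 6) \<in> (adj edges)\<^sup>*"
    using reachable_step[OF r1] triangle j by simp_all
  have "(vx 0 7, vx j 7) \<in> (adj edges)\<^sup>*"
    using reachable_step[OF r06(2)] triangle j by simp
  then show ?thesis
    using triangle r1 r06 reachable_gadget[OF gadget_at_triangle[OF triangle(2,3)]] by auto
next
  case (diamond j s)
  note [simp] = block_diamond[OF diamond(2,3)]
  have r1: "(vx 0 7, vx j 1) \<in> (adj edges)\<^sup>*"
    using reachable_right_port[of j] diamond K_pos by (simp add: right_port_def)
  have r23: "(vx 0 7, vx j 2) \<in> (adj edges)\<^sup>*" "(vx 0 7, vx j 3) \<in> (adj edges)\<^sup>*"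
    using reachable_step[OF r1] diamond by simp_all
  have "(vx 0 7, vx j 0) \<in> (adj edges)\<^sup>*"
    using reachable_step[OF r23(1)] diamond by simp
  then show ?thesis using diamond r1 r23 by auto
qed

lemma connected_chain: "connected_graph verts edges"
  unfolding connected_graph_def
  using reachable_from_end0 sym_rtrancl_adj[of edges] by (meson rtrancl_trans symD)

section \<open>The 2-factors of the chain\<close>

lemma exactly_two_in_two_factor:
  assumes "two_factor verts edges F" "v \<in> verts" "nbrs v = {a, b, c}" "a \<noteq> b" "a \<noteq> c" "b \<noteq> c"
  shows "exactly_two ({v, a} \<in> F) ({v, b} \<in> F) ({v, c} \<in> F)"
  using exactly_two_if_degree_two[OF sym_nbhd_nbrs assms(2) _ _ assms(3-6)] assms(1,2)
  unfolding two_factor_def edges_def by blast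

lemma nbrs_if_two_factor_edge:
  assumes "two_factor verts edges F" "v \<in> verts" "{v, w} \<in> F"
  shows "w \<in> nbrs v"
  using mem_nbhd_if_edge[OF sym_nbhd_nbrs assms(2) _ assms(3)] assms(1)
  unfolding two_factor_def edges_def by blast

lemma gadget_in_two_factor:
  assumes "two_factor verts edges F" "gadget_at j e"
  shows "{vx j 7, e} \<notin> F \<and> {vx j 7, vx j 2} \<in> F \<and> {vx j 7, vx j 3} \<in> F \<and> {vx j 4, vx j 5} \<in> F
    \<and> ({vx j 2, vx j 4} \<in> F \<or> {vx j 2, vx j 5} \<in> F)"
proof -
  note T = exactly_two_in_two_factor[OF assms(1) gadget_atD(1)[OF assms(2)]]
  note N = gadget_atD(2)[OF assms(2)]
  have e: "e \<noteq> vx j 2" "e \<noteq> vx j 3" using gadget_atD(3)[OF assms(2)] by auto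
  have e7: "exactly_two ({vx j 7, vx j 2} \<in> F) ({vx j 7, vx j 3} \<in> F) ({vx j 7, e} \<in> F)"
    using T[of 7 "vx j 2" "vx j 3" e] N[of 7] e by (simp add: gadget_nbrs_def)
  have e2: "exactly_two ({vx j 2, vx j 7} \<in> F) ({vx j 2, vx j 4} \<in> F) ({vx j 2, vx j 5} \<in> F)"
    using T[of 2 "vx j 7" "vx j 4" "vx j 5"] N[of 2] by (simp add: gadget_nbrs_def)
  have e3: "exactly_two ({vx j 3, vx j 7} \<in> F) ({vx j 3, vx j 4} \<in> F) ({vx j 3, vx j 5} \<in> F)"
    using T[of 3 "vx j 7" "vx j 4" "vx j 5"] N[of 3] by (simp add: gadget_nbrs_def)
  have e4: "exactly_two ({vx j 4, vx j 2} \<in> F) ({vx j 4, vx j 3} \<in> F) ({vx j 4, vx j 5} \<in> F)"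
    using T[of 4 "vx j 2" "vx j 3" "vx j 5"] N[of 4] by (simp add: gadget_nbrs_def)
  have e5: "exactly_two ({vx j 5, vx j 2} \<in> F) ({vx j 5, vx j 3} \<in> F) ({vx j 5, vx j 4} \<in> F)"
    using T[of 5 "vx j 2" "vx j 3" "vx j 4"] N[of 5] by (simp add: gadget_nbrs_def)
  show ?thesis
    by (rule exactly_two_gadget[where f = "\<lambda>u w. {u, w} \<in> F", OF e7 e2 e3 e4 e5])
      (simp add: insert_commute)
qed

lemma two_factor_through_triangle:
  assumes "two_factor verts edges F" "0 < j" "j < K" "{vx j 0, right_port (j - 1)} \<notin> F"
  shows "{vx j 1, left_port (Suc j)} \<notin> F
    \<and> {vx j 0, vx j 1} \<in> F \<and> {vx j 0, vx j 6} \<in> F \<and> {vx j 1, vx j 6} \<in> F"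
proof -
  note T = exactly_two_in_two_factor[OF assms(1)]
  note [simp] = block_triangle[OF assms(2,3)]
  have j: "j \<le> Suc m" using assms K_le_m by simp
  have pendant: "{vx j 6, vx j 7} \<notin> F"
    using gadget_in_two_factor[OF assms(1) gadget_at_triangle[OF assms(2,3)]] by (simp add: insert_commute)
  have ports: "right_port (j - 1) \<noteq> vx j 1" "right_port (j - 1) \<noteq> vx j 6"
    "left_port (Suc j) \<noteq> vx j 0" "left_port (Suc j) \<noteq> vx j 6"
    using assms(2) by (auto simp: right_port_def left_port_def)
  have e0: "exactly_two ({vx j 0, vx j 1} \<in> F) ({vx j 0, vx j 6} \<in> F) ({vx j 0, right_port (j - 1)} \<in> F)"
    using T[of "vx j 0" "vx j 1" "vx j 6" "right_port (j - 1)"] ports j by simp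
  have e1: "exactly_two ({vx j 1, vx j 0} \<in> F) ({vx j 1, vx j 6} \<in> F) ({vx j 1, left_port (Suc j)} \<in> F)"
    using T[of "vx j 1" "vx j 0" "vx j 6" "left_port (Suc j)"] ports j by simp
  have e6: "exactly_two ({vx j 6, vx j 0} \<in> F) ({vx j 6, vx j 1} \<in> F) ({vx j 6, vx j 7} \<in> F)"
    using T[of "vx j 6" "vx j 0" "vx j 1" "vx j 7"] j by simp
  show ?thesis
    by (rule exactly_two_triangle[where f = "\<lambda>u w. {u, w} \<in> F", OF e0 e1 e6 pendant assms(4)])
      (simp add: insert_commute)
qed

lemma two_factor_through_diamond:
  assumes "two_factor verts edges F" "K \<le> j" "j \<le> m" "{vx j 0, right_port (j - 1)} \<notin> F"
  shows "{vx j 1, left_port (Suc j)} \<notin> F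
    \<and> {vx j 0, vx j 2} \<in> F \<and> {vx j 0, vx j 3} \<in> F \<and> {vx j 1, vx j 2} \<in> F \<and> {vx j 1, vx j 3} \<in> F"
proof -
  note T = exactly_two_in_two_factor[OF assms(1)]
  note [simp] = block_diamond[OF assms(2,3)]
  have "0 < j" using assms(2) K_pos by simp
  then have ports: "right_port (j - 1) \<noteq> vx j 2" "right_port (j - 1) \<noteq> vx j 3"
    "left_port (Suc j) \<noteq> vx j 2" "left_port (Suc j) \<noteq> vx j 3"
    by (auto simp: right_port_def left_port_def)
  have e0: "exactly_two ({vx j 0, vx j 2} \<in> F) ({vx j 0, vx j 3} \<in> F) ({vx j 0, right_port (j - 1)} \<in> F)"
    using T[of "vx j 0" "vx j 2" "vx j 3" "right_port (j - 1)"] ports assms(3) by simp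
  have e1: "exactly_two ({vx j 1, vx j 2} \<in> F) ({vx j 1, vx j 3} \<in> F) ({vx j 1, left_port (Suc j)} \<in> F)"
    using T[of "vx j 1" "vx j 2" "vx j 3" "left_port (Suc j)"] ports assms(3) by simp
  have e2: "exactly_two ({vx j 2, vx j 0} \<in> F) ({vx j 2, vx j 1} \<in> F) ({vx j 2, vx j 3} \<in> F)"
    using T[of "vx j 2" "vx j 0" "vx j 1" "vx j 3"] assms(3) by simp
  have e3: "exactly_two ({vx j 3, vx j 0} \<in> F) ({vx j 3, vx j 1} \<in> F) ({vx j 3, vx j 2} \<in> F)"
    using T[of "vx j 3" "vx j 0" "vx j 1" "vx j 2"] assms(3) by simp
  show ?thesis
    by (rule exactly_two_diamond[where f = "\<lambda>u w. {u, w} \<in> F", OF e0 e1 e2 e3 assms(4)])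
      (simp add: insert_commute)
qed

lemma bridge_not_in_two_factor:
  assumes "two_factor verts edges F"
  shows "i \<le> m \<Longrightarrow> {right_port i, left_port (Suc i)} \<notin> F"
proof (induction i)
  case 0
  then show ?case using gadget_in_two_factor[OF assms gadget_at_end0] by (simp add: right_port_def)
next
  case (Suc i)
  then have left: "{vx (Suc i) 0, right_port (Suc i - 1)} \<notin> F"
    by (simp add: left_port_le insert_commute)
  show ?case
  proof (cases "Suc i < K")
    case True
    then show ?thesis using two_factor_through_triangle[OF assms _ True left] by (simp add: right_port_Suc)
  next
    case False
    then show ?thesis using two_factor_through_diamond[OF assms _ _ left] Suc.prems by (simp add: right_port_Suc)
  qed
qed

lemma left_bridge_not_in_two_factor:
  assumes "two_factor verts edges F" "0 < j" "j \<le> m"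
  shows "{vx j 0, right_port (j - 1)} \<notin> F"
  using bridge_not_in_two_factor[OF assms(1), of "j - 1"] assms(2,3)
  by (simp add: left_port_le insert_commute)

lemma triangle_in_two_factor:
  assumes "two_factor verts edges F" "0 < j" "j < K"
  shows "{vx j 0, right_port (j - 1)} \<notin> F \<and> {vx j 1, left_port (Suc j)} \<notin> F
    \<and> {vx j 0, vx j 1} \<in> F \<and> {vx j 0, vx j 6} \<in> F \<and> {vx j 1, vx j 6} \<in> F"
  using two_factor_through_triangle[OF assms] left_bridge_not_in_two_factor[OF assms(1,2)]
    assms K_le_m by simp

lemma diamond_in_two_factor:
  assumes "two_factor verts edges F" "K \<le> j" "j \<le> m"
  shows "{vx j 0, right_port (j - 1)} \<notin> F \<and> {vx j 1, left_port (Suc j)} \<notin> F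
    \<and> {vx j 0, vx j 2} \<in> F \<and> {vx j 0, vx j 3} \<in> F \<and> {vx j 1, vx j 2} \<in> F \<and> {vx j 1, vx j 3} \<in> F"
  using two_factor_through_diamond[OF assms] left_bridge_not_in_two_factor[OF assms(1)]
    assms K_pos by simp

lemma closed_connected_gadget_circuit:
  assumes "two_factor verts edges F" "gadget_at j e"
  shows "closed_connected F (gadget_circuit j)"
proof -
  note G = gadget_in_two_factor[OF assms]
  have closed: "w \<in> gadget_circuit j" if v: "v \<in> gadget_circuit j" and vw: "{v, w} \<in> F" for v w
  proof -
    obtain s where s: "s \<in> {2, 3, 4, 5, 7}" "v = vx j s"
      using v unfolding gadget_circuit_def by blast
    have "w \<in> nbrs (vx j s)"
      using nbrs_if_two_factor_edge[OF assms(1) gadget_atD(1)[OF assms(2) s(1)]] s(2) vw by simp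
    moreover have "s < 8" using s(1) by auto
    ultimately have "w \<in> gadget_nbrs j e s" using gadget_atD(2)[OF assms(2) s(1)] by simp
    moreover have "s \<noteq> 7 \<or> w \<noteq> e" using s(2) vw G by auto
    ultimately show ?thesis using s(1) by (auto simp: gadget_nbrs_def gadget_circuit_def)
  qed
  have r23: "(vx j 7, vx j 2) \<in> (adj F)\<^sup>*" "(vx j 7, vx j 3) \<in> (adj F)\<^sup>*"
    using G by (simp_all add: rtrancl_adj_if_edge)
  have r45: "(vx j 7, vx j 4) \<in> (adj F)\<^sup>* \<and> (vx j 7, vx j 5) \<in> (adj F)\<^sup>*"
  proof -
    have e45: "{vx j 4, vx j 5} \<in> F" "{vx j 5, vx j 4} \<in> F" using G by (simp_all add: insert_commute)
    from G consider "{vx j 2, vx j 4} \<in> F" | "{vx j 2, vx j 5} \<in> F" by blast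
    then show ?thesis
    proof cases
      case 1
      then have "(vx j 7, vx j 4) \<in> (adj F)\<^sup>*" by (rule rtrancl_adj_edge[OF r23(1)])
      moreover from this have "(vx j 7, vx j 5) \<in> (adj F)\<^sup>*" by (rule rtrancl_adj_edge[OF _ e45(1)])
      ultimately show ?thesis ..
    next
      case 2
      then have "(vx j 7, vx j 5) \<in> (adj F)\<^sup>*" by (rule rtrancl_adj_edge[OF r23(1)])
      moreover from this have "(vx j 7, vx j 4) \<in> (adj F)\<^sup>*" by (rule rtrancl_adj_edge[OF _ e45(2)])
      ultimately show ?thesis by blast
    qed
  qed
  show ?thesis
    by (rule closed_connectedI[OF closed])
      (use r23 r45 in \<open>auto simp: gadget_circuit_def\<close>)
qed

lemma closed_connected_triangle_circuit:
  assumes "two_factor verts edges F" "0 < j" "j < K"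
  shows "closed_connected F (triangle_circuit j)"
proof -
  note T = triangle_in_two_factor[OF assms]
  note [simp] = block_triangle[OF assms(2,3)]
  have pendant: "{vx j 6, vx j 7} \<notin> F"
    using gadget_in_two_factor[OF assms(1) gadget_at_triangle[OF assms(2,3)]]
    by (simp add: insert_commute)
  have closed: "w \<in> triangle_circuit j" if v: "v \<in> triangle_circuit j" and vw: "{v, w} \<in> F" for v w
  proof -
    obtain s where s: "s \<in> {0, 1, 6}" "v = vx j s"
      using v unfolding triangle_circuit_def by blast
    have "vx j s \<in> verts" using s(1) assms(2,3) K_le_m by auto
    then have "w \<in> nbrs (vx j s)"
      using nbrs_if_two_factor_edge[OF assms(1)] s(2) vw by simp
    moreover have "s < 8" using s(1) by auto
    ultimately have "w \<in> block_nbrs j s" by simp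
    moreover have "s = 0 \<Longrightarrow> w \<noteq> right_port (j - 1)" "s = 1 \<Longrightarrow> w \<noteq> left_port (Suc j)"
      "s = 6 \<Longrightarrow> w \<noteq> vx j 7"
      using s(2) vw T pendant by auto
    ultimately show ?thesis using s(1) by (auto simp: triangle_circuit_def)
  qed
  have "(vx j 0, vx j 1) \<in> (adj F)\<^sup>*" "(vx j 0, vx j 6) \<in> (adj F)\<^sup>*"
    using T by (simp_all add: rtrancl_adj_if_edge)
  then show ?thesis
    by (intro closed_connectedI[OF closed]) (auto simp: triangle_circuit_def)
qed

lemma closed_connected_diamond_circuit:
  assumes "two_factor verts edges F" "K \<le> j" "j \<le> m"
  shows "closed_connected F (diamond_circuit j)"
proof -
  note D = diamond_in_two_factor[OF assms]
  note [simp] = block_diamond[OF assms(2,3)]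
  have closed: "w \<in> diamond_circuit j" if v: "v \<in> diamond_circuit j" and vw: "{v, w} \<in> F" for v w
  proof -
    obtain s where s: "s \<in> {0, 1, 2, 3}" "v = vx j s"
      using v unfolding diamond_circuit_def by blast
    have "vx j s \<in> verts" using s(1) assms(3) by auto
    then have "w \<in> nbrs (vx j s)"
      using nbrs_if_two_factor_edge[OF assms(1)] s(2) vw by simp
    moreover have "s < 8" using s(1) by auto
    ultimately have "w \<in> block_nbrs j s" by simp
    moreover have "s = 0 \<Longrightarrow> w \<noteq> right_port (j - 1)" "s = 1 \<Longrightarrow> w \<noteq> left_port (Suc j)"
      using s(2) vw D by auto
    ultimately show ?thesis using s(1) by (auto simp: diamond_circuit_def)
  qed
  have r23: "(vx j 0, vx j 2) \<in> (adj F)\<^sup>*" "(vx j 0, vx j 3) \<in> (adj F)\<^sup>*"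
    using D by (simp_all add: rtrancl_adj_if_edge)
  have "{vx j 2, vx j 1} \<in> F" using D by (simp add: insert_commute)
  then have "(vx j 0, vx j 1) \<in> (adj F)\<^sup>*" by (rule rtrancl_adj_edge[OF r23(1)])
  then show ?thesis
    by (intro closed_connectedI[OF closed]) (use r23 in \<open>auto simp: diamond_circuit_def\<close>)
qed

definition circuit_of :: "nat \<Rightarrow> nat set" where
  "circuit_of v = (let j = v div 8; s = v mod 8 in
    if s \<in> {2, 3, 4, 5, 7} \<and> (j < K \<or> j = Suc m) then gadget_circuit j
    else if j < K then triangle_circuit j else diamond_circuit j)"

lemma circuit_of_vx [simp]:
  "s < 8 \<Longrightarrow> circuit_of (vx j s) =
    (if s \<in> {2, 3, 4, 5, 7} \<and> (j < K \<or> j = Suc m) then gadget_circuit j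
     else if j < K then triangle_circuit j else diamond_circuit j)"
  by (simp add: circuit_of_def)

lemma circuit_of_partition:
  assumes "v \<in> verts"
  shows "v \<in> circuit_of v \<and> circuit_of v \<subseteq> verts \<and> (\<forall>u\<in>circuit_of v. circuit_of u = circuit_of v)"
  using assms
proof (cases rule: vertex_cases)
  case (end0 s)
  then show ?thesis using K_pos by (auto simp: block_end0 gadget_circuit_def)
next
  case (end1 s)
  then show ?thesis by (auto simp: block_end1 gadget_circuit_def)
next
  case (triangle j s)
  then show ?thesis using K_le_m
    by (auto simp: block_triangle gadget_circuit_def triangle_circuit_def)
next
  case (diamond j s)
  then show ?thesis using K_pos by (auto simp: block_diamond diamond_circuit_def)
qed

lemma closed_connected_circuit_of:
  assumes "two_factor verts edges F" "v \<in> verts"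
  shows "closed_connected F (circuit_of v)"
  using assms(2)
proof (cases rule: vertex_cases)
  case (end0 s)
  then show ?thesis using closed_connected_gadget_circuit[OF assms(1) gadget_at_end0] K_pos by auto
next
  case (end1 s)
  then show ?thesis using closed_connected_gadget_circuit[OF assms(1) gadget_at_end1] by auto
next
  case (triangle j s)
  then show ?thesis
    using closed_connected_gadget_circuit[OF assms(1) gadget_at_triangle]
      closed_connected_triangle_circuit[OF assms(1)] by auto
next
  case (diamond j s)
  then show ?thesis using closed_connected_diamond_circuit[OF assms(1)] by auto
qed

lemma components_two_factor:
  "two_factor verts edges F \<Longrightarrow> components verts F = circuit_of ` verts"
  by (rule components_eq_image) (use circuit_of_partition closed_connected_circuit_of in blast)+

lemma odd_circuits_image:
  "{C \<in> circuit_of ` verts. odd (card C)}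
    = gadget_circuit ` insert (Suc m) {..<K} \<union> triangle_circuit ` {1..<K}"
proof (intro equalityI subsetI)
  fix C assume "C \<in> {C \<in> circuit_of ` verts. odd (card C)}"
  then obtain v where v: "v \<in> verts" "C = circuit_of v" "odd (card C)" by auto
  from v(1) show "C \<in> gadget_circuit ` insert (Suc m) {..<K} \<union> triangle_circuit ` {1..<K}"
  proof (cases rule: vertex_cases)
    case (end0 s)
    then show ?thesis using v(2) K_pos by auto
  next
    case (end1 s)
    then show ?thesis using v(2) by auto
  next
    case (triangle j s)
    then show ?thesis using v(2) by auto
  next
    case (diamond j s)
    then show ?thesis using v(2,3) by auto
  qed
next
  fix C assume "C \<in> gadget_circuit ` insert (Suc m) {..<K} \<union> triangle_circuit ` {1..<K}"
  then consider j where "C = gadget_circuit j" "j = Suc m \<or> j < K"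
    | j where "C = triangle_circuit j" "0 < j" "j < K" by auto
  then show "C \<in> {C \<in> circuit_of ` verts. odd (card C)}"
  proof cases
    case 1
    then have "C \<in> circuit_of ` verts"
      using K_le_m by (intro image_eqI[of _ _ "vx j 7"]) (auto simp: block_slots_def)
    then show ?thesis using 1 by simp
  next
    case 2
    then have "C \<in> circuit_of ` verts"
      using K_le_m by (intro image_eqI[of _ _ "vx j 0"]) (auto simp: block_triangle)
    then show ?thesis using 2 by simp
  qed
qed

lemma odd_circuits_two_factor:
  assumes "two_factor verts edges F"
  shows "odd_circuits verts F = 2 * K"
proof -
  let ?G = "gadget_circuit ` insert (Suc m) {..<K}" and ?T = "triangle_circuit ` {1..<K}"
  have "card ?G = card (insert (Suc m) {..<K})"
    by (rule card_image[OF inj_on_subset[OF inj_gadget_circuit subset_UNIV]])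
  also have "\<dots> = K + 1" using K_le_m by simp
  finally have G: "card ?G = K + 1" .
  have T: "card ?T = K - 1"
    using card_image[OF inj_on_subset[OF inj_triangle_circuit subset_UNIV]] by simp
  have "odd_circuits verts F = card (?G \<union> ?T)"
    unfolding odd_circuits_def components_two_factor[OF assms] odd_circuits_image ..
  also have "\<dots> = card ?G + card ?T"
    using gadget_circuit_neq_triangle_circuit by (intro card_Un_disjoint) auto
  finally show ?thesis using G T K_pos by simp
qed

definition cycle_nbrs :: "nat \<Rightarrow> nat set" where
  "cycle_nbrs v = (let j = v div 8; s = v mod 8 in
    if j = 0 \<or> j = Suc m then gadget_cycle_nbrs j s
    else if j < K then
      (if s = 0 then {vx j 1, vx j 6} else if s = 1 then {vx j 0, vx j 6}
       else if s = 6 then {vx j 0, vx j 1} else gadget_cycle_nbrs j s)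
    else if s = 0 \<or> s = 1 then {vx j 2, vx j 3} else {vx j 0, vx j 1})"

lemma cycle_nbrs_vx [simp]:
  "s < 8 \<Longrightarrow> cycle_nbrs (vx j s) =
    (if j = 0 \<or> j = Suc m then gadget_cycle_nbrs j s
     else if j < K then
       (if s = 0 then {vx j 1, vx j 6} else if s = 1 then {vx j 0, vx j 6}
        else if s = 6 then {vx j 0, vx j 1} else gadget_cycle_nbrs j s)
     else if s = 0 \<or> s = 1 then {vx j 2, vx j 3} else {vx j 0, vx j 1})"
  by (simp add: cycle_nbrs_def)

lemma cycle_nbrs_props:
  assumes "v \<in> verts"
  shows "cycle_nbrs v \<subseteq> nbrs v \<and> card (cycle_nbrs v) = 2 \<and> (\<forall>w\<in>cycle_nbrs v. v \<in> cycle_nbrs w)"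
  using assms
proof (cases rule: vertex_cases)
  case (end0 s)
  then show ?thesis by (auto simp: block_end0 gadget_nbrs_def gadget_cycle_nbrs_def)
next
  case (end1 s)
  then show ?thesis by (auto simp: block_end1 gadget_nbrs_def gadget_cycle_nbrs_def)
next
  case (triangle j s)
  then show ?thesis
    using K_le_m by (auto simp: block_triangle gadget_nbrs_def gadget_cycle_nbrs_def)
next
  case (diamond j s)
  then show ?thesis using K_pos by (auto simp: block_diamond)
qed

lemma two_factor_cycle_nbrs: "two_factor verts edges (nbhd_edges verts cycle_nbrs)"
  unfolding edges_def
  by (rule two_factor_nbhd_edges[OF sym_nbhd_nbrs]) (use cycle_nbrs_props in blast)+

lemma oddness_chain: "oddness verts edges = 2 * K"
  using oddness_eqI[OF two_factor_cycle_nbrs odd_circuits_two_factor] .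

lemma mu3_chain: "m + 1 - K \<le> mu3 verts edges"
proof -
  let ?U = "(\<lambda>j. {vx j 0, vx j 2}) ` {K..m}"
  have "inj_on (\<lambda>j. {vx j 0, vx j 2}) {K..m}"
    by (auto simp: inj_on_def doubleton_eq_iff)
  then have "card ?U = m + 1 - K" by (simp add: card_image)
  moreover have "?U \<subseteq> F" if "two_factor verts edges F" for F
    using diamond_in_two_factor[OF that] by auto
  ultimately show ?thesis
    using card_le_mu3_if_in_every_two_factor[OF cubic_chain two_factor_cycle_nbrs] by metis
qed

end

theorem mainTheorem5:
  fixes k c :: nat
  assumes "k \<ge> 1" and "c \<ge> 1"
  shows "\<exists>(V :: nat set) E. cubic V E \<and> connected_graph V E
           \<and> (\<exists>F. two_factor V E F) \<and> oddness V E = 2 * k \<and> mu3 V E \<ge> c"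
proof -
  interpret chain_graph k "k - 1 + c"
    using assms by unfold_locales simp_all
  have "c = (k - 1 + c) + 1 - k" using assms by simp
  then show ?thesis
    using cubic_chain connected_chain two_factor_cycle_nbrs oddness_chain mu3_chain by metis
qed

end
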